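(* Let $R$ be the ring of integers of a finite extension of $\mathbb Q_p$, let $\nu\in\Lambda^{\mathrm{dig}}_{R,1}$, and let $f_\nu(T)\in R[[T]]$ be the Amice transform of $d_{\infty,1}(\nu)$. Then: (1) $\nu(\mathbf 1)$ is a unit of $R$ if and only if $\mu(f_\nu)=\lambda(f_\nu)=0$; (2) $\nu(\mathbf 1)$ is not a unit of $R$ and $D\nu$ is a unit of $R$ if and only if $\mu(f_\nu)=0$ and $\lambda(f_\nu)=1$.
   Context: $\Lambda^{\mathrm{dig}}_{R,1}=\varprojlim_nR[(\mathbb Z/p)^n]$ is the algebra of $R$-valued measures on $(\mathbb Z/p)^{\mathbb N}$. The digit map $d_{\infty,1}:(\mathbb Z/p)^{\mathbb N}\to\mathbb Z_p$, $(a_i)\mapsto\sum_{i\ge1}\tilde a_ip^{i-1}$ ($\tilde a_i\in\{0,\ldots,p-1\}$), induces by pushforward an $R$-module isomorphism $\Lambda^{\mathrm{dig}}_{R,1}\to R[[\mathbb Z_p]]$. The Amice transform sends $\mu\in R[[\mathbb Z_p]]$ to $\sum_{k\ge0}\mu(\binom{x}{k})T^k$. $\nu(\mathbf 1)$ is the total mass of $\nu$; $D\nu=\sum_{a=1}^{p}a\,\nu(\mathbf 1_{\pi_1^{-1}\{a\}})$ where $\pi_1$ is projection to the first factor $\mathbb Z/p$. Weierstrass invariants: with $\pi$ a uniformizer of $R$, a nonzero $f\in R[[T]]$ factors uniquely as $\pi^{\mu(f)}g(T)u(T)$ with $u\in R[[T]]^\times$ and $g$ monic of degree $\lambda(f)$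 with non-leading coefficients in $(\pi)$; for $f=0$, $\mu(f)=\infty$, $\lambda(f)=0$. *)

theory Defs
  imports "HOL-Computational_Algebra.Polynomial_FPS" "HOL-Library.Extended_Nat"
begin

definition padic_lim :: "'r::comm_ring_1 \<Rightarrow> (nat \<Rightarrow> 'r) \<Rightarrow> 'r \<Rightarrow> bool" where
  "padic_lim \<pi> s l \<longleftrightarrow> (\<forall>m. \<exists>N. \<forall>n\<ge>N. \<pi> ^ m dvd (s n - l))"

text \<open>R (the type) is the ring of integers of a finite extension of Q_p with uniformizer pi:
  a discrete valuation ring of characteristic 0 (type class) with uniformizer pi,
  complete for the pi-adic topology, with finite residue field of characteristic p.\<close>
definition padic_int_ring :: "nat \<Rightarrow> 'r::{idom,ring_char_0} \<Rightarrow> bool" where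
  "padic_int_ring p \<pi> \<longleftrightarrow>
     prime p \<and> \<pi> \<noteq> 0 \<and> \<not> \<pi> dvd 1 \<and>
     (\<forall>x. x \<noteq> 0 \<longrightarrow> (\<exists>u n. u dvd 1 \<and> x = u * \<pi> ^ n)) \<and>
     (\<forall>s. (\<forall>m. \<exists>N. \<forall>i\<ge>N. \<forall>j\<ge>N. \<pi> ^ m dvd (s i - s j)) \<longrightarrow> (\<exists>l. padic_lim \<pi> s l)) \<and>
     (\<exists>S. finite S \<and> (\<forall>x. \<exists>y\<in>S. \<pi> dvd (x - y))) \<and>
     \<pi> dvd of_nat p"

text \<open>An element of (Z/p)^n is a list of length n with entries in {0..<p};
  its first entry is the first coordinate.\<close>
definition digit_lists :: "nat \<Rightarrow> nat \<Rightarrow> nat list set" where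
  "digit_lists p n = {a. length a = n \<and> set a \<subseteq> {..<p}}"

text \<open>An element of the inverse limit of R[(Z/p)^n]: a family of functions on (Z/p)^n
  compatible under the projections (Z/p)^(n+1) -> (Z/p)^n forgetting the last coordinate.\<close>
definition is_dig_measure :: "nat \<Rightarrow> (nat list \<Rightarrow> 'r::comm_ring_1) \<Rightarrow> bool" where
  "is_dig_measure p \<nu> \<longleftrightarrow> (\<forall>a \<in> (\<Union>n. digit_lists p n). \<nu> a = (\<Sum>b<p. \<nu> (a @ [b])))"

definition total_mass :: "(nat list \<Rightarrow> 'r::comm_ring_1) \<Rightarrow> 'r" where
  "total_mass \<nu> = \<nu> []"

text \<open>D nu = sum_{a=1}^{p} a * nu(pi_1^{-1}{a}), where a is read in Z/p (so a = p means 0).\<close>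
definition dig_D :: "nat \<Rightarrow> (nat list \<Rightarrow> 'r::comm_ring_1) \<Rightarrow> 'r" where
  "dig_D p \<nu> = (\<Sum>a\<in>{1..p}. of_nat a * \<nu> [a mod p])"

text \<open>Digit value sum_i a_i p^(i-1) (1-based), here 0-based indexing.\<close>
definition digval :: "nat \<Rightarrow> nat list \<Rightarrow> nat" where
  "digval p a = (\<Sum>i<length a. a ! i * p ^ i)"

text \<open>Pushforward along d_{infty,1}: the measure on Z_p as the compatible family
  mu_n on Z/p^n = {0..<p^n}.\<close>
definition dig_push :: "nat \<Rightarrow> (nat list \<Rightarrow> 'r::comm_ring_1) \<Rightarrow> nat \<Rightarrow> nat \<Rightarrow> 'r" where
  "dig_push p \<nu> n c = (\<Sum>a\<in>{a \<in> digit_lists p n. digval p a = c}. \<nu> a)"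

text \<open>Integral of the continuous function binom(x,k) against a measure mu on Z_p,
  as pi-adic limit of Riemann sums; the Amice transform.\<close>
definition amice_coeff :: "'r::comm_ring_1 \<Rightarrow> nat \<Rightarrow> (nat \<Rightarrow> nat \<Rightarrow> 'r) \<Rightarrow> nat \<Rightarrow> 'r" where
  "amice_coeff \<pi> p \<mu> k =
     (THE l. padic_lim \<pi> (\<lambda>n. \<Sum>c<p ^ n. \<mu> n c * of_nat (c choose k)) l)"

definition amice :: "'r::comm_ring_1 \<Rightarrow> nat \<Rightarrow> (nat \<Rightarrow> nat \<Rightarrow> 'r) \<Rightarrow> 'r fps" where
  "amice \<pi> p \<mu> = Abs_fps (amice_coeff \<pi> p \<mu>)"

definition weier_fact :: "'r::comm_ring_1 \<Rightarrow> 'r fps \<Rightarrow> nat \<Rightarrow> nat \<Rightarrow> bool" where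
  "weier_fact \<pi> f m l \<longleftrightarrow>
     (\<exists>g u. degree g = l \<and> lead_coeff g = 1 \<and> (\<forall>i<l. \<pi> dvd coeff g i) \<and>
            u dvd 1 \<and> f = fps_const (\<pi> ^ m) * fps_of_poly g * u)"

definition weier_mu :: "'r::comm_ring_1 \<Rightarrow> 'r fps \<Rightarrow> enat" where
  "weier_mu \<pi> f = (if f = 0 then \<infinity> else enat (THE m. \<exists>l. weier_fact \<pi> f m l))"

definition weier_lambda :: "'r::comm_ring_1 \<Rightarrow> 'r fps \<Rightarrow> nat" where
  "weier_lambda \<pi> f = (if f = 0 then 0 else (THE l. \<exists>m. weier_fact \<pi> f m l))"

end

(*
  The Amice transform f of the pushforward of \<nu> has constant coefficient f\<^sub>0 = \<nu>(1), and f\<^sub>1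
  is the \<pi>-adic limit of the Riemann sums \<Sum> \<nu>(a) x(a) over the levels (\<int>/p)\<^sup>n. Since the n-th
  digit enters with weight p\<^sup>n and \<pi> | p, all these sums are congruent modulo \<pi> to the first one,
  which differs from D\<nu> by p \<nu>{a\<^sub>1 = 0}. So f\<^sub>1 \<equiv> D\<nu> (mod \<pi>).
  On the other hand, Weierstrass preparation over the complete discrete valuation ring R (proved
  by a \<pi>-adic contraction argument) shows that \<mu>(f) = 0 and \<lambda>(f) = l hold exactly when
  f\<^sub>0, ..., f\<^sub>l\<^sub>-\<^sub>1 are divisible by \<pi> and f\<^sub>l is a unit. Taking l = 0 and l = 1 gives the claim.
*)

theory Submission
  imports Defs
begin

unbundle fps_syntax

lemma fps_dvd_one_iff:
  fixes f :: "'a::comm_ring_1 fps"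
  shows "f dvd 1 \<longleftrightarrow> f $ 0 dvd 1"
proof
  assume "f dvd 1"
  then obtain g where "1 = f * g" by (rule dvdE)
  then have "f $ 0 * g $ 0 = 1" by (metis fps_mult_nth_0 fps_one_nth)
  then show "f $ 0 dvd 1" by (metis dvdI)
next
  assume "f $ 0 dvd 1"
  then obtain y where "f $ 0 * y = 1" by (metis dvdE)
  then have "f * fps_right_inverse f y = 1" by (rule fps_right_inverse)
  then show "f dvd 1" by (metis dvdI)
qed

lemma fps_const_dvd_iff:
  fixes f :: "'a::comm_ring_1 fps"
  shows "fps_const c dvd f \<longleftrightarrow> (\<forall>n. c dvd f $ n)"
proof
  assume "fps_const c dvd f"
  then show "\<forall>n. c dvd f $ n" by (auto elim!: dvdE)
next
  assume "\<forall>n. c dvd f $ n"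
  then have "\<forall>n. \<exists>y. f $ n = c * y" by (auto elim!: dvdE)
  then have "f = fps_const c * Abs_fps (\<lambda>n. SOME y. f $ n = c * y)"
    by (intro fps_ext) (auto intro: someI_ex)
  then show "fps_const c dvd f" by (rule dvdI)
qed

lemma fps_const_dvd_fps_const: "(c :: 'a::comm_ring_1) dvd d \<Longrightarrow> fps_const c dvd fps_const d"
  by (auto simp: fps_const_dvd_iff intro: dvd_mult2)

lemma fps_const_power_dvd:
  "m \<le> n \<Longrightarrow> fps_const ((c :: 'a::comm_ring_1) ^ m) dvd fps_const (c ^ n)"
  by (intro fps_const_dvd_fps_const le_imp_power_dvd)

lemma fps_const_dvd_fps_shift:
  fixes f :: "'a::comm_ring_1 fps"
  shows "fps_const c dvd f \<Longrightarrow> fps_const c dvd fps_shift n f"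
  by (simp add: fps_const_dvd_iff)

lemma fps_eq_monic_poly:
  fixes G :: "'a::comm_ring_1 fps"
  assumes "G $ l = 1" and "\<And>i. i > l \<Longrightarrow> G $ i = 0"
  obtains g where "fps_of_poly g = G" "degree g = l" "lead_coeff g = 1"
proof
  define g where "g = Poly (map (\<lambda>i. G $ i) [0..<Suc l])"
  have coeff_g: "coeff g i = G $ i" for i
    using assms(2)[of i] by (auto simp: g_def nth_default_def simp del: upt_Suc)
  show "fps_of_poly g = G" by (rule fps_ext) (simp add: coeff_g)
  show "degree g = l"
    by (rule antisym, rule degree_le, use assms coeff_g in simp, rule le_degree)
      (simp add: coeff_g assms)
  then show "lead_coeff g = 1" by (simp add: coeff_g assms)
qed

section \<open>Complete discrete valuation rings\<close>

locale complete_dvr =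
  fixes \<pi> :: "'r::idom"
  assumes uniformizer_nonzero: "\<pi> \<noteq> 0"
    and uniformizer_not_unit: "\<not> \<pi> dvd 1"
    and unit_if_not_dvd: "\<not> \<pi> dvd x \<Longrightarrow> x dvd 1"
    and separated: "(\<And>m. \<pi> ^ m dvd x) \<Longrightarrow> x = 0"
    and complete: "(\<And>m n. m \<le> n \<Longrightarrow> \<pi> ^ m dvd s n - s m) \<Longrightarrow> \<exists>L. padic_lim \<pi> s L"

lemma padic_int_ring_complete_dvr:
  assumes R: "padic_int_ring p \<pi>"
  shows "complete_dvr \<pi>"
proof
  have factor: "\<exists>u n. u dvd 1 \<and> x = u * \<pi> ^ n" if "x \<noteq> 0" for x
    using R that unfolding padic_int_ring_def by simp
  show nonzero: "\<pi> \<noteq> 0" and not_unit: "\<not> \<pi> dvd 1"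
    using R unfolding padic_int_ring_def by simp_all
  show "x dvd 1" if "\<not> \<pi> dvd x" for x
  proof -
    have "x \<noteq> 0" using that by auto
    then obtain u n where "u dvd 1" "x = u * \<pi> ^ n" using factor by blast
    with that show ?thesis by (cases n) auto
  qed
  show "x = 0" if dvd: "\<And>m. \<pi> ^ m dvd x" for x
  proof (rule ccontr)
    assume "x \<noteq> 0"
    then obtain u n where u: "u dvd 1" "x = u * \<pi> ^ n" using factor by blast
    then have "\<pi> ^ n * \<pi> dvd \<pi> ^ n * u" using dvd[of "Suc n"] by (simp add: mult.commute)
    then have "\<pi> dvd u" using nonzero by simp
    with u(1) not_unit show False using dvd_trans by blast
  qed
  fix s :: "nat \<Rightarrow> 'a" assume cauchy: "\<And>m n. m \<le> n \<Longrightarrow> \<pi> ^ m dvd s n - s m"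
  have "\<pi> ^ m dvd s i - s j" if "m \<le> i" "m \<le> j" for m i j
    using dvd_diff[OF cauchy[OF that(1)] cauchy[OF that(2)]] by simp
  then have "\<forall>m. \<exists>N. \<forall>i\<ge>N. \<forall>j\<ge>N. \<pi> ^ m dvd s i - s j" by blast
  then show "\<exists>L. padic_lim \<pi> s L"
    using R unfolding padic_int_ring_def by simp
qed

context complete_dvr
begin

lemma unit_iff_not_dvd: "x dvd 1 \<longleftrightarrow> \<not> \<pi> dvd x"
  using unit_if_not_dvd uniformizer_not_unit by (metis dvd_trans)

lemma padic_lim_unique:
  assumes "padic_lim \<pi> s L" and "padic_lim \<pi> s L'"
  shows "L = L'"
proof -
  have "\<pi> ^ m dvd L' - L" for m
  proof -
    obtain N N' where "\<forall>n\<ge>N. \<pi> ^ m dvd s n - L" "\<forall>n\<ge>N'. \<pi> ^ m dvd s n - L'"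
      using assms unfolding padic_lim_def by blast
    then have "\<pi> ^ m dvd s (max N N') - L" "\<pi> ^ m dvd s (max N N') - L'" by simp_all
    from dvd_diff[OF this] show ?thesis by simp
  qed
  then show ?thesis using separated[of "L' - L"] by simp
qed

lemma cauchy_limit:
  assumes cauchy: "\<And>m n. m \<le> n \<Longrightarrow> \<pi> ^ m dvd s n - s m"
  shows "\<exists>L. padic_lim \<pi> s L \<and> (\<forall>m. \<pi> ^ m dvd L - s m)"
proof -
  obtain L where L: "padic_lim \<pi> s L" using complete[OF cauchy] by blast
  have "\<pi> ^ m dvd L - s m" for m
  proof -
    obtain N where "\<forall>n\<ge>N. \<pi> ^ m dvd s n - L" using L unfolding padic_lim_def by blast
    then have "\<pi> ^ m dvd s (max N m) - s m" "\<pi> ^ m dvd s (max N m) - L"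
      using cauchy[of m "max N m"] by simp_all
    from dvd_diff[OF this] show ?thesis by simp
  qed
  with L show ?thesis by blast
qed

lemma fps_separated:
  fixes h :: "'r fps"
  assumes "\<And>m. fps_const (\<pi> ^ m) dvd h"
  shows "h = 0"
proof (rule fps_ext)
  fix i
  have "\<pi> ^ m dvd h $ i" for m using assms[of m] by (simp add: fps_const_dvd_iff)
  then have "h $ i = 0" by (rule separated)
  then show "h $ i = 0 $ i" by simp
qed

lemma fps_cauchy_limit:
  fixes q :: "nat \<Rightarrow> 'r fps"
  assumes cauchy: "\<And>m n. m \<le> n \<Longrightarrow> fps_const (\<pi> ^ m) dvd q n - q m"
  obtains Q where "\<And>m. fps_const (\<pi> ^ m) dvd Q - q m"
proof
  have "\<exists>L. \<forall>m. \<pi> ^ m dvd L - q m $ i" for i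
  proof -
    have "\<pi> ^ m dvd q n $ i - q m $ i" if "m \<le> n" for m n
      using cauchy[OF that] by (simp add: fps_const_dvd_iff)
    from cauchy_limit[OF this] show ?thesis by blast
  qed
  then have "\<forall>m. \<pi> ^ m dvd (SOME L. \<forall>m. \<pi> ^ m dvd L - q m $ i) - q m $ i" for i
    by (rule someI_ex)
  then show "fps_const (\<pi> ^ m) dvd Abs_fps (\<lambda>i. SOME L. \<forall>m. \<pi> ^ m dvd L - q m $ i) - q m" for m
    by (simp add: fps_const_dvd_iff)
qed

lemma contraction_fixpoint:
  fixes \<Psi> :: "'r fps \<Rightarrow> 'r fps"
  assumes contr: "\<And>a b c. fps_const c dvd a - b \<Longrightarrow> fps_const (c * \<pi>) dvd \<Psi> a - \<Psi> b"
  obtains Q where "\<Psi> Q = Q"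
proof -
  define q where "q k = (\<Psi> ^^ k) 0" for k
  have q_Suc: "q (Suc k) = \<Psi> (q k)" for k by (simp add: q_def)
  have q_step: "fps_const (\<pi> ^ k) dvd q (Suc k) - q k" for k
  proof (induction k)
    case (Suc k)
    then show ?case using contr[OF Suc] by (simp add: q_Suc mult.commute)
  qed simp
  have q_cauchy: "fps_const (\<pi> ^ m) dvd q n - q m" if "m \<le> n" for m n
    using that
  proof (induction n rule: dec_induct)
    case (step n)
    have "fps_const (\<pi> ^ m) dvd fps_const (\<pi> ^ n)"
      using step.hyps by (intro fps_const_power_dvd) simp
    then have "fps_const (\<pi> ^ m) dvd (q (Suc n) - q n) + (q n - q m)"
      using dvd_trans[OF _ q_step[of n]] step.IH by (intro dvd_add) auto
    then show ?case by simp
  qed simp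
  obtain Q where Q: "\<And>m. fps_const (\<pi> ^ m) dvd Q - q m"
    using fps_cauchy_limit[OF q_cauchy] by blast
  have "fps_const (\<pi> ^ Suc k) dvd \<Psi> Q - Q" for k
  proof -
    have "fps_const (\<pi> ^ Suc k) dvd \<Psi> Q - \<Psi> (q k)"
      using contr[OF Q[of k]] by (simp add: mult.commute)
    from dvd_diff[OF this Q[of "Suc k"]] show ?thesis by (simp add: q_Suc)
  qed
  then have "fps_const (\<pi> ^ m) dvd \<Psi> Q - Q" for m
    using dvd_trans[OF fps_const_power_dvd[of m "Suc m" \<pi>]] by simp
  then have "\<Psi> Q = Q" using fps_separated[of "\<Psi> Q - Q"] by simp
  then show thesis by (rule that)
qed

section \<open>Weierstrass preparation\<close>

lemma shift_equation_solvable: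
  fixes U P :: "'r fps"
  assumes "U dvd 1" and P_dvd: "fps_const \<pi> dvd P"
  obtains Q where "U * Q = 1 - fps_shift l (Q * P)"
proof -
  obtain V where UV: "U * V = 1" using assms(1) by (metis dvdE)
  define \<Psi> where "\<Psi> q = V * (1 - fps_shift l (q * P))" for q
  have "fps_const (c * \<pi>) dvd \<Psi> a - \<Psi> b" if "fps_const c dvd a - b" for a b c
  proof -
    have "\<Psi> a - \<Psi> b = - V * fps_shift l ((a - b) * P)"
      by (simp add: \<Psi>_def algebra_simps fps_shift_diff)
    moreover have "fps_const (c * \<pi>) dvd (a - b) * P"
      using mult_dvd_mono[OF that P_dvd] by simp
    ultimately show ?thesis by (simp add: fps_const_dvd_fps_shift)
  qed
  then obtain Q where "\<Psi> Q = Q" by (rule contraction_fixpoint)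
  then have "U * Q = 1 - fps_shift l (Q * P)"
    unfolding \<Psi>_def by (metis UV mult.assoc mult_1)
  then show thesis by (rule that)
qed

text \<open>Split \<open>f = P + T\<^sup>l U\<close> with \<open>P\<close> of degree \<open>< l\<close> (divisible by \<open>\<pi>\<close>) and \<open>U\<close> a unit; for the
  solution \<open>Q\<close> of the shift equation, \<open>Q f\<close> is the distinguished polynomial and \<open>Q\<close> is a unit.\<close>

lemma weierstrass_preparation:
  fixes f :: "'r fps"
  assumes low: "\<And>i. i < l \<Longrightarrow> \<pi> dvd f $ i" and unit: "f $ l dvd 1"
  shows "weier_fact \<pi> f 0 l"
proof -
  define P where "P = fps_cutoff l f"
  define U where "U = fps_shift l f"
  have f_eq: "f = fps_X ^ l * U + P" unfolding P_def U_def by (simp add: fps_shift_cutoff')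
  have P_dvd: "fps_const \<pi> dvd P" using low by (simp add: P_def fps_const_dvd_iff)
  have "U dvd 1" using unit by (simp add: U_def fps_dvd_one_iff)
  then obtain Q where UQ: "U * Q = 1 - fps_shift l (Q * P)"
    using P_dvd by (rule shift_equation_solvable)
  have QP_dvd: "fps_const \<pi> dvd Q * P" using P_dvd by simp
  have Qf: "Q * f = Q * P + fps_X ^ l * (1 - fps_shift l (Q * P))"
    by (simp add: f_eq flip: UQ) (simp add: algebra_simps)
  have "(Q * f) $ l = 1" "\<And>i. l < i \<Longrightarrow> (Q * f) $ i = 0"
    by (simp_all add: Qf fps_X_power_mult_nth)
  then obtain g where g: "fps_of_poly g = Q * f" "degree g = l" "lead_coeff g = 1"
    by (rule fps_eq_monic_poly)
  have "coeff g i = (Q * P) $ i" if "i < l" for i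
    using that by (simp flip: fps_of_poly_nth add: g(1) Qf fps_X_power_mult_nth)
  with QP_dvd have g_low: "\<forall>i<l. \<pi> dvd coeff g i" by (simp add: fps_const_dvd_iff)
  have "\<not> \<pi> dvd (U * Q) $ 0"
  proof
    assume "\<pi> dvd (U * Q) $ 0"
    moreover have "\<pi> dvd (Q * P) $ l" using QP_dvd by (simp add: fps_const_dvd_iff)
    ultimately have "\<pi> dvd (U * Q) $ 0 + (Q * P) $ l" by (rule dvd_add)
    then show False using uniformizer_not_unit by (simp add: UQ)
  qed
  then have "Q dvd 1"
    using unit_if_not_dvd dvd_mult_right by (metis fps_dvd_one_iff)
  then obtain W where QW: "Q * W = 1" by (metis dvdE)
  then have "f = fps_const (\<pi> ^ 0) * fps_of_poly g * W"
    by (simp add: g(1) mult.commute mult.left_commute)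
  moreover have "W dvd 1" using QW by (metis dvdI mult.commute)
  ultimately show ?thesis using g g_low unfolding weier_fact_def by blast
qed

lemma weier_fact_coeffs:
  assumes "weier_fact \<pi> f m l"
  shows "\<pi> ^ m dvd f $ i" and "i < l \<Longrightarrow> \<pi> ^ Suc m dvd f $ i"
    and "\<not> \<pi> ^ Suc m dvd f $ l"
proof -
  obtain g u where g: "degree g = l" "lead_coeff g = 1" "\<forall>i<l. \<pi> dvd coeff g i"
    and u: "u dvd 1" and f: "f = fps_const (\<pi> ^ m) * fps_of_poly g * u"
    using assms unfolding weier_fact_def by blast
  define h where "h = fps_of_poly g * u"
  have f_nth: "f $ i = \<pi> ^ m * h $ i" for i by (simp add: f h_def mult.assoc)
  have h_low: "\<pi> dvd h $ i" if "i < l" for i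
    unfolding h_def fps_mult_nth using that g(3) by (auto intro!: dvd_sum dvd_mult2)
  have h_l: "\<pi> dvd h $ l - u $ 0"
  proof -
    have "h $ l = (\<Sum>j<l. coeff g j * u $ (l - j)) + u $ 0"
      using g by (simp add: h_def fps_mult_nth atLeast0AtMost flip: lessThan_Suc_atMost)
    moreover have "\<pi> dvd (\<Sum>j<l. coeff g j * u $ (l - j))"
      using g(3) by (auto intro!: dvd_sum dvd_mult2)
    ultimately show ?thesis by simp
  qed
  have "u $ 0 dvd 1" using u by (simp add: fps_dvd_one_iff)
  then have "\<not> \<pi> dvd u $ 0" by (rule unit_iff_not_dvd[THEN iffD1])
  then have "\<not> \<pi> dvd h $ l" using dvd_diff[OF _ h_l] by fastforce
  then show "\<not> \<pi> ^ Suc m dvd f $ l"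
    using uniformizer_nonzero by (simp add: f_nth power_Suc2)
  show "\<pi> ^ m dvd f $ i" by (simp add: f_nth)
  show "\<pi> ^ Suc m dvd f $ i" if "i < l"
    using h_low[OF that] by (simp add: f_nth power_Suc2)
qed

lemma weier_fact_unique:
  assumes "weier_fact \<pi> f m l" and "weier_fact \<pi> f m' l'"
  shows "m = m'" and "l = l'"
proof -
  have not_less_mu: "\<not> m < m'" if "weier_fact \<pi> f m l" "weier_fact \<pi> f m' l'" for m l m' l'
  proof
    assume "m < m'"
    then have "\<pi> ^ Suc m dvd \<pi> ^ m'" by (intro le_imp_power_dvd) simp
    then show False
      using weier_fact_coeffs[OF that(1)] weier_fact_coeffs(1)[OF that(2), of l] dvd_trans by blast
  qed
  show "m = m'" using not_less_mu assms by (meson linorder_neqE_nat)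
  have not_less_lambda: "\<not> l < l'" if "weier_fact \<pi> f m l" "weier_fact \<pi> f m l'" for l l'
    using weier_fact_coeffs(2,3) that by blast
  show "l = l'" using not_less_lambda assms \<open>m = m'\<close> by (meson linorder_neqE_nat)
qed

lemma weier_fact_scale:
  assumes "weier_fact \<pi> F 0 l"
  shows "weier_fact \<pi> (fps_const (\<pi> ^ m) * F) m l"
proof -
  obtain g u where "degree g = l" "lead_coeff g = 1" "\<forall>i<l. \<pi> dvd coeff g i" "u dvd 1"
    and "F = fps_of_poly g * u"
    using assms unfolding weier_fact_def by auto
  then show ?thesis
    unfolding weier_fact_def by (intro exI[of _ g] exI[of _ u]) (simp add: mult.assoc)
qed

lemma weier_fact_exists:
  fixes f :: "'r fps"
  assumes "f \<noteq> 0"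
  obtains m l where "weier_fact \<pi> f m l"
proof -
  obtain i0 where "f $ i0 \<noteq> 0" using assms by (auto simp: fps_eq_iff)
  then obtain M where M: "\<not> \<pi> ^ M dvd f $ i0" using separated[of "f $ i0"] by blast
  define m where "m = (LEAST n. \<exists>i. \<not> \<pi> ^ Suc n dvd f $ i)"
  have "\<not> \<pi> ^ Suc M dvd f $ i0" using M dvd_trans[OF le_imp_power_dvd[of M "Suc M" \<pi>]] by auto
  then have "\<exists>n i. \<not> \<pi> ^ Suc n dvd f $ i" by blast
  then have m_not_dvd: "\<exists>i. \<not> \<pi> ^ Suc m dvd f $ i"
    unfolding m_def by (rule LeastI_ex[of "\<lambda>n. \<exists>i. \<not> \<pi> ^ Suc n dvd f $ i"])
  have "\<pi> ^ m dvd f $ i" for i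
  proof (cases m)
    case (Suc k)
    then have "k < m" by simp
    then have "k < (LEAST n. \<exists>i. \<not> \<pi> ^ Suc n dvd f $ i)" unfolding m_def .
    from not_less_Least[OF this] show ?thesis using Suc by simp
  qed simp
  then have "fps_const (\<pi> ^ m) dvd f" by (simp add: fps_const_dvd_iff)
  then obtain F where F: "f = fps_const (\<pi> ^ m) * F" by (rule dvdE)
  have "\<exists>i. \<not> \<pi> dvd F $ i"
    using m_not_dvd uniformizer_nonzero by (simp add: F power_Suc2)
  from exists_least_iff[THEN iffD1, OF this]
  obtain l where l: "\<not> \<pi> dvd F $ l" "\<And>i. i < l \<Longrightarrow> \<pi> dvd F $ i" by blast
  then have "weier_fact \<pi> F 0 l" by (intro weierstrass_preparation) (auto intro: unit_if_not_dvd)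
  then have "weier_fact \<pi> f m l" unfolding F by (rule weier_fact_scale)
  then show thesis by (rule that)
qed

lemma weier_invariants:
  assumes W: "weier_fact \<pi> f m l"
  shows "weier_mu \<pi> f = m" and "weier_lambda \<pi> f = l"
proof -
  have "f \<noteq> 0" using weier_fact_coeffs(3)[OF W] by auto
  moreover have "(THE m. \<exists>l. weier_fact \<pi> f m l) = m" "(THE l. \<exists>m. weier_fact \<pi> f m l) = l"
    using W weier_fact_unique[OF W] by (intro the_equality; blast)+
  ultimately show "weier_mu \<pi> f = m" "weier_lambda \<pi> f = l"
    by (simp_all add: weier_mu_def weier_lambda_def)
qed

lemma weier_mu_zero_lambda_iff:
  "weier_mu \<pi> f = 0 \<and> weier_lambda \<pi> f = l \<longleftrightarrow> (\<forall>i<l. \<pi> dvd f $ i) \<and> \<not> \<pi> dvd f $ l"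
proof
  assume inv: "weier_mu \<pi> f = 0 \<and> weier_lambda \<pi> f = l"
  then have "f \<noteq> 0" by (auto simp: weier_mu_def)
  then obtain m l' where W: "weier_fact \<pi> f m l'" by (rule weier_fact_exists)
  with inv have "weier_fact \<pi> f 0 l" using weier_invariants[OF W] by (simp add: zero_enat_def)
  from weier_fact_coeffs(2,3)[OF this] show "(\<forall>i<l. \<pi> dvd f $ i) \<and> \<not> \<pi> dvd f $ l" by simp
next
  assume "(\<forall>i<l. \<pi> dvd f $ i) \<and> \<not> \<pi> dvd f $ l"
  then have "weier_fact \<pi> f 0 l" by (intro weierstrass_preparation) (auto intro: unit_if_not_dvd)
  then show "weier_mu \<pi> f = 0 \<and> weier_lambda \<pi> f = l" by (simp add: weier_invariants zero_enat_def)
qed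

end

section \<open>Riemann sums of measures on \<open>(\<int>/p)\<^sup>\<nat>\<close>\<close>

lemma finite_digit_lists: "finite (digit_lists p n)"
proof -
  have "digit_lists p n = {xs. set xs \<subseteq> {..<p} \<and> length xs = n}"
    unfolding digit_lists_def by auto
  then show ?thesis using finite_lists_length_eq[of "{..<p}" n] by simp
qed

lemma digit_lists_0: "digit_lists p 0 = {[]}"
  unfolding digit_lists_def by auto

lemma digit_lists_Suc: "digit_lists p (Suc n) = (\<lambda>(a, b). a @ [b]) ` (digit_lists p n \<times> {..<p})"
proof
  show "digit_lists p (Suc n) \<subseteq> (\<lambda>(a, b). a @ [b]) ` (digit_lists p n \<times> {..<p})"
  proof
    fix x assume x: "x \<in> digit_lists p (Suc n)"
    then have "x \<noteq> []" unfolding digit_lists_def by auto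
    then obtain a b where "x = a @ [b]" by (metis rev_exhaust)
    with x show "x \<in> (\<lambda>(a, b). a @ [b]) ` (digit_lists p n \<times> {..<p})"
      unfolding digit_lists_def by (auto intro!: image_eqI[of _ _ "(a, b)"])
  qed
qed (auto simp: digit_lists_def)

lemma sum_digit_lists_Suc:
  "(\<Sum>a\<in>digit_lists p (Suc n). F a) = (\<Sum>a\<in>digit_lists p n. \<Sum>b<p. F (a @ [b]))"
proof -
  have inj: "inj_on (\<lambda>(a, b). a @ [b]) (digit_lists p n \<times> {..<p})"
    by (auto simp: inj_on_def)
  have "(\<Sum>a\<in>digit_lists p (Suc n). F a) = (\<Sum>x\<in>digit_lists p n \<times> {..<p}. F ((\<lambda>(a, b). a @ [b]) x))"
    unfolding digit_lists_Suc by (rule sum.reindex[OF inj, unfolded comp_def])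
  also have "\<dots> = (\<Sum>a\<in>digit_lists p n. \<Sum>b<p. F (a @ [b]))"
    unfolding sum.cartesian_product by (intro sum.cong) auto
  finally show ?thesis .
qed

lemma digval_snoc: "digval p (a @ [b]) = digval p a + b * p ^ length a"
  unfolding digval_def by (simp add: nth_append)

lemma digval_less: "a \<in> digit_lists p n \<Longrightarrow> digval p a < p ^ n"
proof (induction a arbitrary: n rule: rev_induct)
  case Nil
  then show ?case by (simp add: digit_lists_def digval_def)
next
  case (snoc b a)
  then have n: "n = Suc (length a)" and "b < p" and "a \<in> digit_lists p (length a)"
    unfolding digit_lists_def by auto
  then have "digval p a + b * p ^ length a < p ^ length a + b * p ^ length a"
    using snoc.IH by simp
  also have "\<dots> \<le> p * p ^ length a"
    using \<open>b < p\<close> by (metis add.commute less_eq_Suc_le mult_Suc mult_le_mono1)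
  finally show ?case by (simp add: digval_snoc n)
qed

lemma sum_dig_push:
  fixes \<nu> :: "nat list \<Rightarrow> 'r::comm_ring_1"
  shows "(\<Sum>c<p ^ n. dig_push p \<nu> n c * h c) = (\<Sum>a\<in>digit_lists p n. \<nu> a * h (digval p a))"
proof -
  have "(\<Sum>c<p ^ n. dig_push p \<nu> n c * h c)
      = (\<Sum>c<p ^ n. \<Sum>a\<in>{a \<in> digit_lists p n. digval p a = c}. \<nu> a * h (digval p a))"
    unfolding dig_push_def sum_distrib_right by (intro sum.cong refl) auto
  also have "\<dots> = (\<Sum>a\<in>digit_lists p n. \<nu> a * h (digval p a))"
    by (rule sum.group) (auto simp: finite_digit_lists digval_less)
  finally show ?thesis .
qed

lemma sum_digit_lists_dig_measure:
  assumes "is_dig_measure p \<nu>"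
  shows "(\<Sum>a\<in>digit_lists p n. \<nu> a) = total_mass \<nu>"
proof (induction n)
  case 0
  then show ?case by (simp add: digit_lists_0 total_mass_def)
next
  case (Suc n)
  have "(\<Sum>a\<in>digit_lists p (Suc n). \<nu> a) = (\<Sum>a\<in>digit_lists p n. \<Sum>b<p. \<nu> (a @ [b]))"
    by (rule sum_digit_lists_Suc)
  also have "\<dots> = (\<Sum>a\<in>digit_lists p n. \<nu> a)"
    using assms unfolding is_dig_measure_def by (intro sum.cong refl) auto
  finally show ?case using Suc by simp
qed

definition dig_first_moment :: "nat \<Rightarrow> (nat list \<Rightarrow> 'r::comm_ring_1) \<Rightarrow> nat \<Rightarrow> 'r" where
  "dig_first_moment p \<nu> n = (\<Sum>a\<in>digit_lists p n. \<nu> a * of_nat (digval p a))"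

lemma dig_first_moment_Suc:
  assumes "is_dig_measure p \<nu>"
  shows "dig_first_moment p \<nu> (Suc n) = dig_first_moment p \<nu> n
           + of_nat p ^ n * (\<Sum>a\<in>digit_lists p n. \<Sum>b<p. \<nu> (a @ [b]) * of_nat b)"
proof -
  have len: "length a = n" if "a \<in> digit_lists p n" for a
    using that unfolding digit_lists_def by simp
  have "dig_first_moment p \<nu> (Suc n)
      = (\<Sum>a\<in>digit_lists p n. \<Sum>b<p. \<nu> (a @ [b]) * (of_nat (digval p a) + of_nat b * of_nat p ^ n))"
    unfolding dig_first_moment_def sum_digit_lists_Suc
    by (intro sum.cong refl) (simp add: digval_snoc len)
  also have "\<dots> = (\<Sum>a\<in>digit_lists p n. of_nat (digval p a) * (\<Sum>b<p. \<nu> (a @ [b])))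
      + of_nat p ^ n * (\<Sum>a\<in>digit_lists p n. \<Sum>b<p. \<nu> (a @ [b]) * of_nat b)"
    by (simp add: algebra_simps sum.distrib sum_distrib_left sum_distrib_right)
  also have "(\<Sum>a\<in>digit_lists p n. of_nat (digval p a) * (\<Sum>b<p. \<nu> (a @ [b]))) = dig_first_moment p \<nu> n"
    using assms unfolding dig_first_moment_def is_dig_measure_def
    by (intro sum.cong refl) (auto simp: mult.commute)
  finally show ?thesis .
qed

lemma dig_first_moment_cong:
  assumes "is_dig_measure p \<nu>" and "m \<le> n"
  shows "of_nat p ^ m dvd dig_first_moment p \<nu> n - dig_first_moment p \<nu> m"
  using assms(2)
proof (induction n rule: dec_induct)
  case (step n)
  have "of_nat p ^ m dvd (of_nat p ^ n :: 'a)"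
    using step.hyps by (intro le_imp_power_dvd) simp
  then have "of_nat p ^ m dvd dig_first_moment p \<nu> (Suc n) - dig_first_moment p \<nu> n"
    by (simp add: dig_first_moment_Suc[OF assms(1)])
  from dvd_add[OF this step.IH] show ?case by simp
qed simp

lemma dig_D_eq_first_moment: "dig_D p \<nu> = dig_first_moment p \<nu> 1 + of_nat p * \<nu> [0]"
proof (cases "p = 0")
  case True
  then show ?thesis by (simp add: dig_D_def dig_first_moment_def digit_lists_Suc)
next
  case False
  have "dig_first_moment p \<nu> 1 = (\<Sum>b<p. of_nat b * \<nu> [b])"
    unfolding dig_first_moment_def One_nat_def sum_digit_lists_Suc
    by (simp add: digit_lists_0 digval_def mult.commute)
  also have "\<dots> = (\<Sum>b\<in>{1..<p}. of_nat b * \<nu> [b])"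
    using False by (simp add: atLeast0LessThan[symmetric] sum.atLeast_Suc_lessThan)
  also have "\<dots> = (\<Sum>a\<in>{1..<p}. of_nat a * \<nu> [a mod p])"
    by (intro sum.cong refl) simp
  finally show ?thesis
    using False by (simp add: dig_D_def atLeastLessThanSuc_atLeastAtMost[symmetric] add.commute)
qed

section \<open>The first two coefficients of the Amice transform\<close>

context complete_dvr
begin

lemma amice_dig_push_nthI:
  assumes "padic_lim \<pi> (\<lambda>n. \<Sum>a\<in>digit_lists p n. \<nu> a * of_nat (digval p a choose k)) L"
  shows "amice \<pi> p (dig_push p \<nu>) $ k = L"
proof -
  have "padic_lim \<pi> (\<lambda>n. \<Sum>c<p ^ n. dig_push p \<nu> n c * of_nat (c choose k)) L"
    using assms by (simp only: sum_dig_push)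
  then have "amice_coeff \<pi> p (dig_push p \<nu>) k = L"
    unfolding amice_coeff_def using padic_lim_unique by blast
  then show ?thesis by (simp add: amice_def)
qed

lemma amice_dig_push_nth_0:
  assumes "is_dig_measure p \<nu>"
  shows "amice \<pi> p (dig_push p \<nu>) $ 0 = total_mass \<nu>"
  by (rule amice_dig_push_nthI) (simp add: padic_lim_def sum_digit_lists_dig_measure[OF assms])

lemma amice_dig_push_nth_1:
  assumes \<nu>: "is_dig_measure p \<nu>" and p: "\<pi> dvd of_nat p"
  shows "\<pi> dvd amice \<pi> p (dig_push p \<nu>) $ 1 - dig_D p \<nu>"
proof -
  have "\<pi> ^ m dvd dig_first_moment p \<nu> n - dig_first_moment p \<nu> m" if "m \<le> n" for m n
    using dvd_trans[OF dvd_power_same[OF p] dig_first_moment_cong[OF \<nu> that]] .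
  from cauchy_limit[OF this] obtain L where L: "padic_lim \<pi> (dig_first_moment p \<nu>) L"
    and "\<pi> dvd L - dig_first_moment p \<nu> 1"
    by (metis power_one_right)
  from L have "amice \<pi> p (dig_push p \<nu>) $ 1 = L"
    by (intro amice_dig_push_nthI) (simp add: dig_first_moment_def[abs_def])
  moreover have "\<pi> dvd (L - dig_first_moment p \<nu> 1) - of_nat p * \<nu> [0]"
    using dvd_diff[OF \<open>\<pi> dvd L - dig_first_moment p \<nu> 1\<close> dvd_mult2[OF p]] .
  ultimately show ?thesis by (simp add: dig_D_eq_first_moment diff_diff_eq)
qed

end

theorem corollary4p2:
  fixes p :: nat and \<pi> :: "'r::{idom,ring_char_0}" and \<nu> :: "nat list \<Rightarrow> 'r"
  assumes R: "padic_int_ring p \<pi>"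
    and nu: "is_dig_measure p \<nu>"
  defines "f \<equiv> amice \<pi> p (dig_push p \<nu>)"
  shows "(total_mass \<nu> dvd 1 \<longleftrightarrow> weier_mu \<pi> f = 0 \<and> weier_lambda \<pi> f = 0)
       \<and> ((\<not> total_mass \<nu> dvd 1 \<and> dig_D p \<nu> dvd 1)
            \<longleftrightarrow> weier_mu \<pi> f = 0 \<and> weier_lambda \<pi> f = 1)"
proof -
  interpret complete_dvr \<pi> using R by (rule padic_int_ring_complete_dvr)
  have "\<pi> dvd of_nat p" using R by (simp add: padic_int_ring_def)
  then have "\<pi> dvd f $ 1 - dig_D p \<nu>" unfolding f_def by (rule amice_dig_push_nth_1[OF nu])
  then have f1: "\<pi> dvd f $ 1 \<longleftrightarrow> \<pi> dvd dig_D p \<nu>"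
    by (metis diff_add_cancel dvd_add_right_iff)
  have f0: "f $ 0 = total_mass \<nu>" unfolding f_def by (rule amice_dig_push_nth_0[OF nu])
  show ?thesis
    using weier_mu_zero_lambda_iff[of f 0] weier_mu_zero_lambda_iff[of f 1] f1
    by (simp add: f0 unit_iff_not_dvd less_Suc_eq)
qed

end
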